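(* Let $X$ be a connected open Riemann surface, $X^* = X\cup\{\infty\}$ its one-point compactification, and let $E \subseteq X$ be a closed subset. Then $E$ has the bounded exhaustion hull (BEH) property if and only if $X^* \setminus E$ is locally connected at $\infty$.
   Context: For a closed set $A\subseteq X$, a hole of $A$ is a relatively compact connected component of $X\setminus A$, and $h(A)$ denotes the union of all holes of $A$. A closed set $E\subseteq X$ has the BEH property if for every compact set $K\subseteq X$ the set $h(E\cup K)$ is relatively compact in $X$. *)

theory Defs
  imports "HOL-Complex_Analysis.Complex_Analysis"
begin

definition complex_chart :: "'a topology \<Rightarrow> 'a set \<Rightarrow> ('a \<Rightarrow> complex) \<Rightarrow> bool" where
  "complex_chart X U \<phi> \<longleftrightarrow> openin X U \<and> open (\<phi> ` U) \<and>
     homeomorphic_map (subtopology X U) (top_of_set (\<phi> ` U)) \<phi>"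

definition holomorphic_atlas :: "'a topology \<Rightarrow> ('a set \<times> ('a \<Rightarrow> complex)) set \<Rightarrow> bool" where
  "holomorphic_atlas X \<A> \<longleftrightarrow>
     (\<forall>(U,\<phi>)\<in>\<A>. complex_chart X U \<phi>) \<and>
     (\<Union>(U,\<phi>)\<in>\<A>. U) = topspace X \<and>
     (\<forall>(U,\<phi>)\<in>\<A>. \<forall>(V,\<psi>)\<in>\<A>. (\<psi> \<circ> inv_into U \<phi>) holomorphic_on (\<phi> ` (U \<inter> V)))"

definition riemann_surface :: "'a topology \<Rightarrow> bool" where
  "riemann_surface X \<longleftrightarrow> Hausdorff_space X \<and> second_countable X \<and> connected_space X \<and>
     topspace X \<noteq> {} \<and> (\<exists>\<A>. holomorphic_atlas X \<A>)"

definition open_riemann_surface :: "'a topology \<Rightarrow> bool" where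
  "open_riemann_surface X \<longleftrightarrow> riemann_surface X \<and> \<not> compact_space X"

section \<open>One-point compactification (None plays the role of the point at infinity)\<close>

definition opc_open :: "'a topology \<Rightarrow> 'a option set \<Rightarrow> bool" where
  "opc_open X U \<longleftrightarrow> U \<subseteq> insert None (Some ` topspace X) \<and> openin X (Some -` U) \<and>
     (None \<in> U \<longrightarrow> compactin X (topspace X - Some -` U))"

lemma istopology_opc_open: "istopology (opc_open X)"
  unfolding istopology_def
proof (intro conjI allI impI)
  fix S T assume S: "opc_open X S" and T: "opc_open X T"
  have "topspace X - Some -` (S \<inter> T) = (topspace X - Some -` S) \<union> (topspace X - Some -` T)"
    by auto
  then show "opc_open X (S \<inter> T)"
    using S T unfolding opc_open_def
    by (auto simp: compactin_Un)
next
  fix K assume K: "\<forall>S\<in>K. opc_open X S"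
  have sub: "\<Union>K \<subseteq> insert None (Some ` topspace X)"
    using K unfolding opc_open_def by blast
  have op: "openin X (Some -` \<Union>K)"
  proof -
    have "Some -` \<Union>K = (\<Union>S\<in>K. Some -` S)" by auto
    then show ?thesis using K unfolding opc_open_def by auto
  qed
  have cp: "compactin X (topspace X - Some -` \<Union>K)" if "None \<in> \<Union>K"
  proof -
    from that obtain S where "S \<in> K" "None \<in> S" by blast
    then have c: "compactin X (topspace X - Some -` S)" using K unfolding opc_open_def by blast
    have "closedin X (topspace X - Some -` \<Union>K)" using op by blast
    moreover have "topspace X - Some -` \<Union>K \<subseteq> topspace X - Some -` S" using \<open>S \<in> K\<close> by blast
    ultimately show ?thesis using c closed_compactin by blast
  qed
  show "opc_open X (\<Union>K)" unfolding opc_open_def using sub op cp by blast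
qed

definition one_point_compactification :: "'a topology \<Rightarrow> 'a option topology" where
  "one_point_compactification X = topology (opc_open X)"

lemma openin_one_point_compactification:
  "openin (one_point_compactification X) U = opc_open X U"
  unfolding one_point_compactification_def using istopology_opc_open
  by (simp add: topology_inverse'[OF istopology_opc_open])

definition holes :: "'a topology \<Rightarrow> 'a set \<Rightarrow> 'a set set" where
  "holes X A = {C \<in> connected_components_of (subtopology X (topspace X - A)).
                  compactin X (X closure_of C)}"

definition hull_h :: "'a topology \<Rightarrow> 'a set \<Rightarrow> 'a set" where
  "hull_h X A = \<Union>(holes X A)"

definition BEH :: "'a topology \<Rightarrow> 'a set \<Rightarrow> bool" where
  "BEH X E \<longleftrightarrow> closedin X E \<and>
     (\<forall>K. compactin X K \<longrightarrow> compactin X (X closure_of (hull_h X (E \<union> K))))"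

end

theory Submission
  imports Defs
begin

(* The open neighbourhoods of the
   point at infinity in X* - E are the sets {\<infinity>} \<union> (X - (E \<union> K)) with K compact.
   If E has the BEH property, then for compact K the point \<infinity> together with all components
   of X - (E \<union> K) that are not relatively compact is connected (\<infinity> lies in the closure of each
   of them) and open (it contains the complement of the compact set K \<union> closure h(E \<union> K)).
   Conversely, a connected neighbourhood V of \<infinity> inside {\<infinity>} \<union> (X - (E \<union> K)) misses every
   hole C of E \<union> K, because C and the rest of X - (E \<union> K) together with the complement of
   the compact closure of C would separate V; since V contains {\<infinity>} \<union> (X - (E \<union> K')) for
   some compact K', all holes of E \<union> K lie in K'. *)

lemma locally_connected_space_euclidean:
  "locally_connected_space (euclidean :: 'a::real_normed_vector topology)"
  unfolding locally_connected_space
proof (intro allI impI)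
  fix V and x :: 'a
  assume "openin euclidean V \<and> x \<in> V"
  then obtain e where "e > 0" "ball x e \<subseteq> V"
    by (force simp: open_contains_ball)
  then show "\<exists>U. openin euclidean U \<and> connectedin euclidean U \<and> x \<in> U \<and> U \<subseteq> V"
    by (intro exI[of _ "ball x e"]) auto
qed

lemma locally_connected_space_open_cover:
  assumes "\<And>x. x \<in> topspace X \<Longrightarrow>
             \<exists>U. openin X U \<and> x \<in> U \<and> locally_connected_space (subtopology X U)"
  shows "locally_connected_space X"
  unfolding locally_connected_space
proof (intro allI impI)
  fix V x
  assume V: "openin X V \<and> x \<in> V"
  then have "x \<in> topspace X"
    using openin_subset by blast
  then obtain U where U: "openin X U" "x \<in> U" and lcU: "locally_connected_space (subtopology X U)"
    using assms by blast
  have "openin (subtopology X U) (V \<inter> U) \<and> x \<in> V \<inter> U"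
    using V U by (simp add: openin_subtopology_Int)
  then obtain W where W: "openin (subtopology X U) W" "connectedin (subtopology X U) W"
      "x \<in> W" "W \<subseteq> V \<inter> U"
    using lcU[unfolded locally_connected_space, rule_format] by blast
  then show "\<exists>W. openin X W \<and> connectedin X W \<and> x \<in> W \<and> W \<subseteq> V"
    using openin_trans_full[OF W(1) U(1)] connectedin_subtopology by blast
qed

lemma riemann_surface_imp_locally_connected_space:
  assumes "riemann_surface X"
  shows "locally_connected_space X"
proof (rule locally_connected_space_open_cover)
  fix x assume x: "x \<in> topspace X"
  obtain \<A> where \<A>: "holomorphic_atlas X \<A>"
    using assms unfolding riemann_surface_def by blast
  have charts: "\<forall>(U,\<phi>)\<in>\<A>. complex_chart X U \<phi>"
    and cover: "(\<Union>(U,\<phi>)\<in>\<A>. U) = topspace X"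
    using \<A> unfolding holomorphic_atlas_def by simp_all
  obtain U \<phi> where "(U, \<phi>) \<in> \<A>" "x \<in> U"
    using cover x by blast
  then have U: "openin X U" "x \<in> U" and "open (\<phi> ` U)"
    and hom: "homeomorphic_map (subtopology X U) (top_of_set (\<phi> ` U)) \<phi>"
    using charts unfolding complex_chart_def by auto
  have "locally_connected_space (top_of_set (\<phi> ` U))"
    using \<open>open (\<phi> ` U)\<close>
    by (simp add: locally_connected_space_open_subset locally_connected_space_euclidean)
  then have "locally_connected_space (subtopology X U)"
    using homeomorphic_locally_connected_space[OF homeomorphic_map_imp_homeomorphic_space[OF hom]]
    by simp
  with U show "\<exists>U. openin X U \<and> x \<in> U \<and> locally_connected_space (subtopology X U)"
    by blast
qed

lemma locally_connected_at_iff_open_connected: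
  "locally_connected_at x X \<longleftrightarrow>
     (\<forall>W. openin X W \<and> x \<in> W \<longrightarrow> (\<exists>V. openin X V \<and> connectedin X V \<and> x \<in> V \<and> V \<subseteq> W))"
  unfolding locally_connected_at_def by (subst open_neighbourhood_base_at) auto

definition infinity_nbhd :: "'a topology \<Rightarrow> 'a set \<Rightarrow> 'a option set" where
  "infinity_nbhd X K = insert None (Some ` (topspace X - K))"

abbreviation opc_minus :: "'a topology \<Rightarrow> 'a set \<Rightarrow> 'a option topology" where
  "opc_minus X E \<equiv> subtopology (one_point_compactification X)
                       (topspace (one_point_compactification X) - Some ` E)"

lemma vimage_Some_insert_None [simp]: "Some -` insert None (Some ` S) = S"
  by auto

lemma infinity_nbhd_mono: "K \<subseteq> L \<Longrightarrow> infinity_nbhd X L \<subseteq> infinity_nbhd X K"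
  unfolding infinity_nbhd_def by blast

lemma infinity_nbhd_Int: "infinity_nbhd X K \<inter> infinity_nbhd X L = infinity_nbhd X (K \<union> L)"
  unfolding infinity_nbhd_def by auto

lemma topspace_one_point_compactification:
  "topspace (one_point_compactification X) = infinity_nbhd X {}"
proof -
  have "openin (one_point_compactification X) (infinity_nbhd X {})"
    unfolding openin_one_point_compactification opc_open_def by (simp add: infinity_nbhd_def)
  moreover have "S \<subseteq> infinity_nbhd X {}" if "openin (one_point_compactification X) S" for S
    using that unfolding openin_one_point_compactification opc_open_def infinity_nbhd_def by simp
  ultimately show ?thesis
    by (meson openin_subset openin_topspace subset_antisym)
qed

lemma topspace_one_point_compactification_Diff_Some:
  "topspace (one_point_compactification X) - Some ` E = infinity_nbhd X E"
  by (auto simp: topspace_one_point_compactification infinity_nbhd_def)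

lemma openin_one_point_compactification_Some_image:
  assumes "openin X S"
  shows "openin (one_point_compactification X) (Some ` S)"
  using assms openin_subset[OF assms]
  unfolding openin_one_point_compactification opc_open_def by (auto simp: inj_vimage_image_eq)

lemma openin_one_point_compactification_infinity_nbhd:
  assumes "Hausdorff_space X" "compactin X K"
  shows "openin (one_point_compactification X) (infinity_nbhd X K)"
proof -
  have "closedin X K"
    using assms compactin_imp_closedin by blast
  moreover have "topspace X - (topspace X - K) = K"
    using assms(2) compactin_subset_topspace by blast
  ultimately show ?thesis
    using assms(2) unfolding openin_one_point_compactification opc_open_def
    by (auto simp: infinity_nbhd_def)
qed

lemma infinity_nbhd_subset_openin:
  assumes "openin (one_point_compactification X) W" "None \<in> W"
  obtains K where "compactin X K" "infinity_nbhd X K = W"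
proof
  show "compactin X (topspace X - Some -` W)"
    using assms unfolding openin_one_point_compactification opc_open_def by blast
  show "infinity_nbhd X (topspace X - Some -` W) = W"
    using assms unfolding openin_one_point_compactification opc_open_def infinity_nbhd_def
    by (auto simp: Diff_Diff_Int)
qed

lemma continuous_map_Some: "continuous_map X (one_point_compactification X) Some"
proof -
  have "{x \<in> topspace X. Some x \<in> U} = Some -` U" if "openin X (Some -` U)" for U
    using openin_subset[OF that] by auto
  then show ?thesis
    unfolding continuous_map_def topspace_one_point_compactification
      openin_one_point_compactification opc_open_def
    by (auto simp: infinity_nbhd_def)
qed

lemma connectedin_one_point_compactification_insert_None:
  assumes H: "Hausdorff_space X" and C: "connectedin X C"
    and not_rel_compact: "\<not> compactin X (X closure_of C)"
  shows "connectedin (one_point_compactification X) (insert None (Some ` C))"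
proof -
  let ?Y = "one_point_compactification X"
  have conn: "connectedin ?Y (Some ` C)"
    using connectedin_continuous_map_image[OF continuous_map_Some C] .
  have "None \<in> ?Y closure_of (Some ` C)"
    unfolding in_closure_of
  proof (intro conjI allI impI)
    show "None \<in> topspace ?Y"
      by (simp add: topspace_one_point_compactification infinity_nbhd_def)
    fix W
    assume "None \<in> W \<and> openin ?Y W"
    then obtain K where K: "compactin X K" "infinity_nbhd X K = W"
      using infinity_nbhd_subset_openin by metis
    have "\<not> C \<subseteq> K"
      using closure_of_minimal compactin_imp_closedin[OF H K(1)] not_rel_compact
        closed_compactin[OF K(1) _ closedin_closure_of] by metis
    then show "\<exists>y. y \<in> Some ` C \<and> y \<in> W"
      using K(2) connectedin_subset_topspace[OF C] by (auto simp: infinity_nbhd_def)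
  qed
  then show ?thesis
    using connectedin_intermediate_closure_of[OF conn]
      closure_of_subset[OF connectedin_subset_topspace[OF conn]] by blast
qed

lemma connectedin_one_point_compactification_insert_None_Union:
  assumes H: "Hausdorff_space X"
    and \<C>: "\<And>C. C \<in> \<C> \<Longrightarrow> connectedin X C \<and> \<not> compactin X (X closure_of C)"
  shows "connectedin (one_point_compactification X) (insert None (Some ` \<Union>\<C>))"
proof -
  have "connectedin (one_point_compactification X) (insert None (Some ` C))" if "C \<in> \<C>" for C
    using \<C>[OF that] by (intro connectedin_one_point_compactification_insert_None[OF H]) auto
  then have "connectedin (one_point_compactification X)
               (\<Union>(insert {None} ((\<lambda>C. insert None (Some ` C)) ` \<C>)))"
    by (intro connectedin_Union) (auto simp: topspace_one_point_compactification infinity_nbhd_def)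
  moreover have "\<Union>(insert {None} ((\<lambda>C. insert None (Some ` C)) ` \<C>)) = insert None (Some ` \<Union>\<C>)"
    by blast
  ultimately show ?thesis
    by simp
qed

lemma holes_disjoint_connectedin_infinity_nbhd:
  assumes H: "Hausdorff_space X" and LC: "locally_connected_space X" and A: "closedin X A"
    and C: "C \<in> holes X A"
    and V: "connectedin (one_point_compactification X) V" "None \<in> V" "V \<subseteq> infinity_nbhd X A"
  shows "Some ` C \<inter> V = {}"
proof -
  let ?Y = "one_point_compactification X"
  define \<Omega> where "\<Omega> = topspace X - A"
  have comp: "C \<in> connected_components_of (subtopology X \<Omega>)"
    and rel_compact: "compactin X (X closure_of C)"
    using C unfolding holes_def \<Omega>_def by auto
  have open_\<Omega>: "openin X \<Omega>"
    using A unfolding \<Omega>_def by blast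
  have "C \<subseteq> \<Omega>" and "C \<subseteq> topspace X"
    using connected_components_of_subset[OF comp] \<Omega>_def by auto
  \<comment> \<open>Q is a neighbourhood of None because the closure of the hole C is compact.\<close>
  define Q where "Q = Some ` (\<Omega> - C) \<union> infinity_nbhd X (X closure_of C)"
  have "topspace (subtopology X \<Omega>) = \<Omega>"
    unfolding \<Omega>_def by auto
  then have "openin (subtopology X \<Omega>) (\<Omega> - C)"
    using closedin_connected_components_of[OF comp] by (simp add: closedin_def)
  then have "openin X (\<Omega> - C)"
    using open_\<Omega> openin_trans_full by blast
  then have open_Q: "openin ?Y Q"
    unfolding Q_def
    by (intro openin_Un openin_one_point_compactification_Some_image
        openin_one_point_compactification_infinity_nbhd[OF H rel_compact])
  have "openin X C"
    using LC open_\<Omega> comp locally_connected_space_open_connected_components by blast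
  then have open_C: "openin ?Y (Some ` C)"
    by (rule openin_one_point_compactification_Some_image)
  from closure_of_subset[OF \<open>C \<subseteq> topspace X\<close>]
  have "Some ` C \<inter> Q = {}"
    unfolding Q_def by (auto simp: infinity_nbhd_def)
  moreover have "V \<subseteq> Some ` C \<union> Q"
    using V(3) unfolding Q_def by (auto simp: infinity_nbhd_def \<Omega>_def)
  moreover have "None \<in> Q \<inter> V"
    using V(2) unfolding Q_def by (simp add: infinity_nbhd_def)
  ultimately show ?thesis
    using V(1) open_C open_Q unfolding connectedin by blast
qed

lemma openin_opc_minus_infinity_nbhd:
  assumes "Hausdorff_space X" "compactin X K"
  shows "openin (opc_minus X E) (infinity_nbhd X (E \<union> K))"
  using openin_subtopology_Int[OF openin_one_point_compactification_infinity_nbhd[OF assms],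
      of "topspace (one_point_compactification X) - Some ` E"]
  by (simp add: topspace_one_point_compactification_Diff_Some infinity_nbhd_Int Un_commute)

lemma infinity_nbhd_subset_openin_opc_minus:
  assumes "openin (opc_minus X E) W" "None \<in> W"
  obtains K where "compactin X K" "infinity_nbhd X (E \<union> K) \<subseteq> W"
proof -
  obtain T where T: "openin (one_point_compactification X) T" "W = T \<inter> infinity_nbhd X E"
    using assms(1) by (auto simp: openin_subtopology topspace_one_point_compactification_Diff_Some)
  then obtain K where K: "compactin X K" "infinity_nbhd X K = T"
    using assms(2) infinity_nbhd_subset_openin by blast
  then have "W = infinity_nbhd X (E \<union> K)"
    using T(2) K(2) infinity_nbhd_Int[of X K E] by (simp add: Un_commute)
  with K(1) that show ?thesis
    by blast
qed

definition unbounded_components :: "'a topology \<Rightarrow> 'a set \<Rightarrow> 'a set set" where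
  "unbounded_components X A =
     {C \<in> connected_components_of (subtopology X (topspace X - A)). \<not> compactin X (X closure_of C)}"

lemma Union_unbounded_components_subset: "\<Union>(unbounded_components X A) \<subseteq> topspace X - A"
  unfolding unbounded_components_def using connected_components_of_subset by fastforce

lemma openin_Union_unbounded_components:
  assumes "locally_connected_space X" "closedin X A"
  shows "openin X (\<Union>(unbounded_components X A))"
  unfolding unbounded_components_def
  using assms locally_connected_space_open_connected_components by (intro openin_Union) blast

lemma Diff_hull_h_subset_Union_unbounded_components:
  "topspace X - (A \<union> hull_h X A) \<subseteq> \<Union>(unbounded_components X A)"
proof
  fix y assume y: "y \<in> topspace X - (A \<union> hull_h X A)"
  then obtain C where C: "C \<in> connected_components_of (subtopology X (topspace X - A))" "y \<in> C"
    using Union_connected_components_of[of "subtopology X (topspace X - A)"] by auto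
  with y have "C \<notin> holes X A"
    unfolding hull_h_def by blast
  with C show "y \<in> \<Union>(unbounded_components X A)"
    unfolding holes_def unbounded_components_def by blast
qed

lemma locally_connected_at_infinity_if_BEH:
  assumes H: "Hausdorff_space X" and LC: "locally_connected_space X" and BEH: "BEH X E"
  shows "locally_connected_at None (opc_minus X E)"
  unfolding locally_connected_at_iff_open_connected
proof (intro allI impI)
  fix W
  assume "openin (opc_minus X E) W \<and> None \<in> W"
  then obtain K where K: "compactin X K" and KW: "infinity_nbhd X (E \<union> K) \<subseteq> W"
    using infinity_nbhd_subset_openin_opc_minus by blast
  define A where "A = E \<union> K"
  define L where "L = X closure_of hull_h X A"
  define V where "V = insert None (Some ` \<Union>(unbounded_components X A))"
  have "compactin X L"
    using BEH K unfolding BEH_def L_def A_def by blast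
  have "closedin X A"
    unfolding A_def using BEH H K BEH_def compactin_imp_closedin by blast
  then have "openin (opc_minus X E) (Some ` \<Union>(unbounded_components X A))"
    using Union_unbounded_components_subset[of X A]
    unfolding topspace_one_point_compactification_Diff_Some
    by (intro subset_openin_subtopology openin_one_point_compactification_Some_image
        openin_Union_unbounded_components LC) (auto simp: infinity_nbhd_def A_def)
  moreover have "openin (opc_minus X E) (infinity_nbhd X (E \<union> (K \<union> L)))"
    using H K \<open>compactin X L\<close> by (simp add: openin_opc_minus_infinity_nbhd compactin_Un)
  moreover have "hull_h X A \<subseteq> L"
    unfolding L_def hull_h_def holes_def
    by (intro closure_of_subset) (use connected_components_of_subset in fastforce)
  then have "V = Some ` \<Union>(unbounded_components X A) \<union> infinity_nbhd X (E \<union> (K \<union> L))"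
    using Union_unbounded_components_subset[of X A]
      Diff_hull_h_subset_Union_unbounded_components[of X A]
    unfolding V_def A_def infinity_nbhd_def by blast
  ultimately have "openin (opc_minus X E) V"
    by (simp add: openin_Un)
  have "connectedin (one_point_compactification X) V"
    unfolding V_def unbounded_components_def
    using connectedin_connected_components_of connectedin_subtopology
    by (intro connectedin_one_point_compactification_insert_None_Union[OF H]) blast
  moreover have "V \<subseteq> infinity_nbhd X A"
    using Union_unbounded_components_subset[of X A] unfolding V_def infinity_nbhd_def by blast
  moreover have "infinity_nbhd X A \<subseteq> infinity_nbhd X E"
    unfolding A_def by (simp add: infinity_nbhd_mono)
  ultimately have "connectedin (opc_minus X E) V"
    by (simp add: connectedin_subtopology topspace_one_point_compactification_Diff_Some)
  with \<open>openin (opc_minus X E) V\<close> \<open>V \<subseteq> infinity_nbhd X A\<close> KW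
  show "\<exists>V. openin (opc_minus X E) V \<and> connectedin (opc_minus X E) V \<and> None \<in> V \<and> V \<subseteq> W"
    unfolding A_def V_def by blast
qed

lemma BEH_if_locally_connected_at_infinity:
  assumes H: "Hausdorff_space X" and LC: "locally_connected_space X" and E: "closedin X E"
    and lc: "locally_connected_at None (opc_minus X E)"
  shows "BEH X E"
  unfolding BEH_def
proof (intro conjI allI impI)
  fix K
  assume K: "compactin X K"
  have "None \<in> infinity_nbhd X (E \<union> K)"
    by (simp add: infinity_nbhd_def)
  then obtain V where V: "openin (opc_minus X E) V" "connectedin (opc_minus X E) V" "None \<in> V"
      "V \<subseteq> infinity_nbhd X (E \<union> K)"
    using lc openin_opc_minus_infinity_nbhd[OF H K] unfolding locally_connected_at_iff_open_connected
    by meson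
  then obtain K' where K': "compactin X K'" "infinity_nbhd X (E \<union> K') \<subseteq> V"
    using infinity_nbhd_subset_openin_opc_minus by blast
  have "closedin X (E \<union> K)"
    using E H K compactin_imp_closedin by blast
  have "hull_h X (E \<union> K) \<subseteq> K'"
  proof
    fix y
    assume "y \<in> hull_h X (E \<union> K)"
    then obtain C where C: "C \<in> holes X (E \<union> K)" "y \<in> C"
      unfolding hull_h_def by blast
    have "Some ` C \<inter> V = {}"
      using V(2) connectedin_subtopology
      by (intro holes_disjoint_connectedin_infinity_nbhd[OF H LC \<open>closedin X (E \<union> K)\<close> C(1)]
          V(3-4)) blast
    moreover have "y \<in> topspace X - (E \<union> K)"
      using C connected_components_of_subset unfolding holes_def by fastforce
    ultimately show "y \<in> K'"
      using C(2) K'(2) unfolding infinity_nbhd_def by blast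
  qed
  then have "X closure_of hull_h X (E \<union> K) \<subseteq> K'"
    using closure_of_minimal compactin_imp_closedin[OF H K'(1)] by blast
  then show "compactin X (X closure_of hull_h X (E \<union> K))"
    using closed_compactin[OF K'(1) _ closedin_closure_of] by blast
qed (rule E)

theorem BEH_iff_locally_connected_at_infinity:
  assumes "Hausdorff_space X" "locally_connected_space X" "closedin X E"
  shows "BEH X E \<longleftrightarrow> locally_connected_at None (opc_minus X E)"
  using assms locally_connected_at_infinity_if_BEH BEH_if_locally_connected_at_infinity by blast

theorem proposition3p1:
  fixes X :: "'a topology" and E :: "'a set"
  assumes "open_riemann_surface X"
    and "closedin X E"
  shows "BEH X E \<longleftrightarrow>
    locally_connected_at None
      (subtopology (one_point_compactification X)
         (topspace (one_point_compactification X) - Some ` E))"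
proof -
  have "riemann_surface X"
    using assms(1) unfolding open_riemann_surface_def by blast
  then have "Hausdorff_space X" and "locally_connected_space X"
    using riemann_surface_imp_locally_connected_space unfolding riemann_surface_def by blast+
  then show ?thesis
    using BEH_iff_locally_connected_at_infinity assms(2) by blast
qed

end
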